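(* Let $(\mathcal{C},\mathbb{E},\mathfrak{s})$ satisfy (ET1), (ET2) and (ET3). If $\mathbb{F}\subseteq\mathbb{E}$ is an additive subfunctor having enough injective morphisms, then $\mathrm{Ph}(\mathbb{F})={}^{\perp_{\mathbb{E}}}(\mathbb{F}\text{-}\mathrm{inj})$.
   Context: $\mathcal{C}$ additive, $\mathbb{E}:\mathcal{C}^{\mathrm{op}}\times\mathcal{C}\to\mathrm{Ab}$ biadditive (ET1); for $\delta\in\mathbb{E}(C,A)$, $a:A\to A'$, $c:C'\to C$ put $a_\star\delta=\mathbb{E}(C,a)(\delta)$, $c^\star\delta=\mathbb{E}(c,A)(\delta)$. (ET2): $\mathfrak{s}$ is an additive realization (Nakaoka–Palu): each $\delta\in\mathbb{E}(C,A)$ is assigned an equivalence class of sequences $A\xrightarrow{x}B\xrightarrow{y}C$ (up to isomorphism of middle terms), $0$ is realized by split sequences, realization respects direct sums, and if $a_\star\delta=c^\star\delta'$ there is $b$ making the realizing sequences commute. Realized pairs are $\mathbb{E}$-triangles $A\xrightarrow{x}B\xrightarrow{y}C\overset{\delta}{\dashrightarrow}$ ($x$ an $\mathbb{E}$-inflation); such commuting triples are morphisms of $\mathbb{E}$-triangles. (ET3): given $\mathbb{E}$-triangles $A\xrightarrow{x}B\to C\overset{\delta}{\dashrightarrow}$, $A'\xrightarrow{x'}B'\to C'\overset{\delta'}{\dashrightarrow}$ and $a,b$ with $bx=x'a$, there is $c$ with $(a,b,c)$ a morphism of $\mathbb{E}$-triangles. Additive subfunctor $\mathbb{F}$: subgroups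 $\mathbb{F}(C,A)\subseteq\mathbb{E}(C,A)$ stable under $a_\star,c^\star$; $\mathbb{F}$-triangles are $\mathbb{E}$-triangles with extension in $\mathbb{F}$. $\mathrm{Ph}(\mathbb{F})$: morphisms $\varphi:X\to C$ with $\varphi^\star\delta\in\mathbb{F}(X,A)$ for all $\delta\in\mathbb{E}(C,A)$. $\mathbb{F}\text{-}\mathrm{inj}$: morphisms $i:A\to Y$ with $i_\star\delta=0$ for all $\delta\in\mathbb{F}(C,A)$. For a class $\mathcal{M}$ of morphisms, ${}^{\perp_{\mathbb{E}}}\mathcal{M}$ is the class of $g:X\to C$ with $g^\star m_\star\delta=0$ for all $m\in\mathcal{M}$, $m:A\to Y$, and all $\delta\in\mathbb{E}(C,A)$. $\mathbb{F}$ has enough injective morphisms if for every $A$ there is an $\mathbb{F}$-triangle $A\xrightarrow{e}B\to C\overset{\delta}{\dashrightarrow}$ with $e\in\mathbb{F}\text{-}\mathrm{inj}$. *)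

theory Defs
  imports "HOL-Algebra.Group"
begin

text \<open>
  Data of a triple (C, E, s): an additive category C (objects of type 'o,
  morphisms of type 'm, hom-sets hom X Y, composition cmp g f = g o f,
  identities, addition of morphisms and zero morphisms), a biadditive functor
  E : C^op x C -> Ab (groups ext C A with operation eadd C A and unit
  ezero C A; for c : C' -> C and a : A -> A', emap c a : E(C,A) -> E(C',A')),
  and a realization s, given as the relation real C A delta x y meaning that
  the sequence A --x--> B --y--> C belongs to the class s(delta).
\<close>

record ('o, 'm, 'e) ecat =
  ob    :: "'o set"
  hom   :: "'o \<Rightarrow> 'o \<Rightarrow> 'm set"
  cmp   :: "'m \<Rightarrow> 'm \<Rightarrow> 'm"
  idm   :: "'o \<Rightarrow> 'm"
  madd  :: "'m \<Rightarrow> 'm \<Rightarrow> 'm"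
  mzero :: "'o \<Rightarrow> 'o \<Rightarrow> 'm"
  ext   :: "'o \<Rightarrow> 'o \<Rightarrow> 'e set"
  eadd  :: "'o \<Rightarrow> 'o \<Rightarrow> 'e \<Rightarrow> 'e \<Rightarrow> 'e"
  ezero :: "'o \<Rightarrow> 'o \<Rightarrow> 'e"
  emap  :: "'m \<Rightarrow> 'm \<Rightarrow> 'e \<Rightarrow> 'e"
  real  :: "'o \<Rightarrow> 'o \<Rightarrow> 'e \<Rightarrow> 'm \<Rightarrow> 'm \<Rightarrow> bool"

definition homgrp :: "('o,'m,'e) ecat \<Rightarrow> 'o \<Rightarrow> 'o \<Rightarrow> 'm monoid" where
  "homgrp T X Y = \<lparr>carrier = hom T X Y, mult = madd T, one = mzero T X Y\<rparr>"

definition extgrp :: "('o,'m,'e) ecat \<Rightarrow> 'o \<Rightarrow> 'o \<Rightarrow> 'e monoid" where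
  "extgrp T C A = \<lparr>carrier = ext T C A, mult = eadd T C A, one = ezero T C A\<rparr>"

text \<open>a_* delta = E(C,a)(delta) for delta in E(C,A);  c^* delta = E(c,A)(delta).\<close>
definition push :: "('o,'m,'e) ecat \<Rightarrow> 'o \<Rightarrow> 'm \<Rightarrow> 'e \<Rightarrow> 'e" where
  "push T C a \<delta> = emap T (idm T C) a \<delta>"

definition pull :: "('o,'m,'e) ecat \<Rightarrow> 'o \<Rightarrow> 'm \<Rightarrow> 'e \<Rightarrow> 'e" where
  "pull T A c \<delta> = emap T c (idm T A) \<delta>"

definition is_category :: "('o,'m,'e) ecat \<Rightarrow> bool" where
  "is_category T \<longleftrightarrow>
     (\<forall>X\<in>ob T. \<forall>Y\<in>ob T. \<forall>X'\<in>ob T. \<forall>Y'\<in>ob T.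
        hom T X Y \<inter> hom T X' Y' \<noteq> {} \<longrightarrow> X = X' \<and> Y = Y') \<and>
     (\<forall>X\<in>ob T. idm T X \<in> hom T X X) \<and>
     (\<forall>X\<in>ob T. \<forall>Y\<in>ob T. \<forall>f\<in>hom T X Y.
        cmp T f (idm T X) = f \<and> cmp T (idm T Y) f = f) \<and>
     (\<forall>X\<in>ob T. \<forall>Y\<in>ob T. \<forall>Z\<in>ob T. \<forall>f\<in>hom T X Y. \<forall>g\<in>hom T Y Z.
        cmp T g f \<in> hom T X Z) \<and>
     (\<forall>W\<in>ob T. \<forall>X\<in>ob T. \<forall>Y\<in>ob T. \<forall>Z\<in>ob T.
        \<forall>f\<in>hom T W X. \<forall>g\<in>hom T X Y. \<forall>h\<in>hom T Y Z.
        cmp T h (cmp T g f) = cmp T (cmp T h g) f)"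

definition is_biproduct ::
  "('o,'m,'e) ecat \<Rightarrow> 'o \<Rightarrow> 'o \<Rightarrow> 'o \<Rightarrow> 'm \<Rightarrow> 'm \<Rightarrow> 'm \<Rightarrow> 'm \<Rightarrow> bool" where
  "is_biproduct T X Y S i1 i2 p1 p2 \<longleftrightarrow>
     S \<in> ob T \<and> i1 \<in> hom T X S \<and> i2 \<in> hom T Y S \<and> p1 \<in> hom T S X \<and> p2 \<in> hom T S Y \<and>
     cmp T p1 i1 = idm T X \<and> cmp T p2 i2 = idm T Y \<and>
     cmp T p1 i2 = mzero T Y X \<and> cmp T p2 i1 = mzero T X Y \<and>
     madd T (cmp T i1 p1) (cmp T i2 p2) = idm T S"

definition is_additive_category :: "('o,'m,'e) ecat \<Rightarrow> bool" where
  "is_additive_category T \<longleftrightarrow>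
     is_category T \<and>
     (\<forall>X\<in>ob T. \<forall>Y\<in>ob T. comm_group (homgrp T X Y)) \<and>
     (\<forall>W\<in>ob T. \<forall>X\<in>ob T. \<forall>Y\<in>ob T. \<forall>f\<in>hom T W X. \<forall>g\<in>hom T X Y. \<forall>g'\<in>hom T X Y.
        cmp T (madd T g g') f = madd T (cmp T g f) (cmp T g' f)) \<and>
     (\<forall>X\<in>ob T. \<forall>Y\<in>ob T. \<forall>Z\<in>ob T. \<forall>f\<in>hom T X Y. \<forall>f'\<in>hom T X Y. \<forall>g\<in>hom T Y Z.
        cmp T g (madd T f f') = madd T (cmp T g f) (cmp T g f')) \<and>
     (\<exists>Z\<in>ob T. \<forall>X\<in>ob T. hom T X Z = {mzero T X Z} \<and> hom T Z X = {mzero T Z X}) \<and>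
     (\<forall>X\<in>ob T. \<forall>Y\<in>ob T. \<exists>S i1 i2 p1 p2. is_biproduct T X Y S i1 i2 p1 p2)"

definition ET1 :: "('o,'m,'e) ecat \<Rightarrow> bool" where
  "ET1 T \<longleftrightarrow>
     (\<forall>C\<in>ob T. \<forall>A\<in>ob T. comm_group (extgrp T C A)) \<and>
     (\<forall>C\<in>ob T. \<forall>C'\<in>ob T. \<forall>A\<in>ob T. \<forall>A'\<in>ob T. \<forall>c\<in>hom T C' C. \<forall>a\<in>hom T A A'.
        (\<forall>\<delta>\<in>ext T C A. emap T c a \<delta> \<in> ext T C' A') \<and>
        (\<forall>\<delta>\<in>ext T C A. \<forall>\<delta>'\<in>ext T C A.
           emap T c a (eadd T C A \<delta> \<delta>') = eadd T C' A' (emap T c a \<delta>) (emap T c a \<delta>'))) \<and>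
     (\<forall>C\<in>ob T. \<forall>A\<in>ob T. \<forall>\<delta>\<in>ext T C A. emap T (idm T C) (idm T A) \<delta> = \<delta>) \<and>
     (\<forall>C\<in>ob T. \<forall>C1\<in>ob T. \<forall>C2\<in>ob T. \<forall>A\<in>ob T. \<forall>A1\<in>ob T. \<forall>A2\<in>ob T.
        \<forall>c1\<in>hom T C1 C. \<forall>c2\<in>hom T C2 C1. \<forall>a1\<in>hom T A A1. \<forall>a2\<in>hom T A1 A2.
        \<forall>\<delta>\<in>ext T C A.
          emap T (cmp T c1 c2) (cmp T a2 a1) \<delta> = emap T c2 a2 (emap T c1 a1 \<delta>)) \<and>
     (\<forall>C\<in>ob T. \<forall>C'\<in>ob T. \<forall>A\<in>ob T. \<forall>A'\<in>ob T.
        \<forall>c\<in>hom T C' C. \<forall>c'\<in>hom T C' C. \<forall>a\<in>hom T A A'. \<forall>\<delta>\<in>ext T C A.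
          emap T (madd T c c') a \<delta> = eadd T C' A' (emap T c a \<delta>) (emap T c' a \<delta>)) \<and>
     (\<forall>C\<in>ob T. \<forall>C'\<in>ob T. \<forall>A\<in>ob T. \<forall>A'\<in>ob T.
        \<forall>c\<in>hom T C' C. \<forall>a\<in>hom T A A'. \<forall>a'\<in>hom T A A'. \<forall>\<delta>\<in>ext T C A.
          emap T c (madd T a a') \<delta> = eadd T C' A' (emap T c a \<delta>) (emap T c a' \<delta>))"

definition is_iso :: "('o,'m,'e) ecat \<Rightarrow> 'o \<Rightarrow> 'o \<Rightarrow> 'm \<Rightarrow> bool" where
  "is_iso T B B' b \<longleftrightarrow> b \<in> hom T B B' \<and>
     (\<exists>b'\<in>hom T B' B. cmp T b' b = idm T B \<and> cmp T b b' = idm T B')"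

definition is_seq :: "('o,'m,'e) ecat \<Rightarrow> 'o \<Rightarrow> 'o \<Rightarrow> 'm \<Rightarrow> 'm \<Rightarrow> bool" where
  "is_seq T A C x y \<longleftrightarrow> (\<exists>B\<in>ob T. x \<in> hom T A B \<and> y \<in> hom T B C)"

definition seq_equiv :: "('o,'m,'e) ecat \<Rightarrow> 'o \<Rightarrow> 'o \<Rightarrow> 'm \<Rightarrow> 'm \<Rightarrow> 'm \<Rightarrow> 'm \<Rightarrow> bool" where
  "seq_equiv T A C x y x' y' \<longleftrightarrow>
     (\<exists>B\<in>ob T. \<exists>B'\<in>ob T. x \<in> hom T A B \<and> y \<in> hom T B C \<and> x' \<in> hom T A B' \<and> y' \<in> hom T B' C \<and>
        (\<exists>b. is_iso T B B' b \<and> cmp T b x = x' \<and> cmp T y' b = y))"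

definition ET2 :: "('o,'m,'e) ecat \<Rightarrow> bool" where
  "ET2 T \<longleftrightarrow>
     \<comment> \<open>each delta is assigned an equivalence class of sequences\<close>
     (\<forall>C\<in>ob T. \<forall>A\<in>ob T. \<forall>\<delta>\<in>ext T C A.
        (\<exists>x y. real T C A \<delta> x y) \<and>
        (\<forall>x y. real T C A \<delta> x y \<longrightarrow> is_seq T A C x y) \<and>
        (\<forall>x y x' y'. real T C A \<delta> x y \<longrightarrow>
            (real T C A \<delta> x' y' \<longleftrightarrow> seq_equiv T A C x y x' y'))) \<and>
     \<comment> \<open>realization condition on morphisms\<close>
     (\<forall>A\<in>ob T. \<forall>B\<in>ob T. \<forall>C\<in>ob T. \<forall>A'\<in>ob T. \<forall>B'\<in>ob T. \<forall>C'\<in>ob T.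
        \<forall>\<delta>\<in>ext T C A. \<forall>\<delta>'\<in>ext T C' A'.
        \<forall>x\<in>hom T A B. \<forall>y\<in>hom T B C. \<forall>x'\<in>hom T A' B'. \<forall>y'\<in>hom T B' C'.
        \<forall>a\<in>hom T A A'. \<forall>c\<in>hom T C C'.
          real T C A \<delta> x y \<longrightarrow> real T C' A' \<delta>' x' y' \<longrightarrow>
          push T C a \<delta> = pull T A' c \<delta>' \<longrightarrow>
          (\<exists>b\<in>hom T B B'. cmp T b x = cmp T x' a \<and> cmp T y' b = cmp T c y)) \<and>
     \<comment> \<open>0 is realized by split sequences\<close>
     (\<forall>A\<in>ob T. \<forall>C\<in>ob T. \<forall>S i1 i2 p1 p2.
        is_biproduct T A C S i1 i2 p1 p2 \<longrightarrow> real T C A (ezero T C A) i1 p2) \<and>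
     \<comment> \<open>realization respects direct sums\<close>
     (\<forall>A\<in>ob T. \<forall>B\<in>ob T. \<forall>C\<in>ob T. \<forall>A'\<in>ob T. \<forall>B'\<in>ob T. \<forall>C'\<in>ob T.
        \<forall>\<delta>\<in>ext T C A. \<forall>\<delta>'\<in>ext T C' A'.
        \<forall>x\<in>hom T A B. \<forall>y\<in>hom T B C. \<forall>x'\<in>hom T A' B'. \<forall>y'\<in>hom T B' C'.
        \<forall>SA ia1 ia2 pa1 pa2 SB ib1 ib2 pb1 pb2 SC ic1 ic2 pc1 pc2.
          is_biproduct T A A' SA ia1 ia2 pa1 pa2 \<longrightarrow>
          is_biproduct T B B' SB ib1 ib2 pb1 pb2 \<longrightarrow>
          is_biproduct T C C' SC ic1 ic2 pc1 pc2 \<longrightarrow>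
          real T C A \<delta> x y \<longrightarrow> real T C' A' \<delta>' x' y' \<longrightarrow>
          real T SC SA
            (eadd T SC SA (emap T pc1 ia1 \<delta>) (emap T pc2 ia2 \<delta>'))
            (madd T (cmp T ib1 (cmp T x pa1)) (cmp T ib2 (cmp T x' pa2)))
            (madd T (cmp T ic1 (cmp T y pb1)) (cmp T ic2 (cmp T y' pb2))))"

definition ET3 :: "('o,'m,'e) ecat \<Rightarrow> bool" where
  "ET3 T \<longleftrightarrow>
     (\<forall>A\<in>ob T. \<forall>B\<in>ob T. \<forall>C\<in>ob T. \<forall>A'\<in>ob T. \<forall>B'\<in>ob T. \<forall>C'\<in>ob T.
        \<forall>\<delta>\<in>ext T C A. \<forall>\<delta>'\<in>ext T C' A'.
        \<forall>x\<in>hom T A B. \<forall>y\<in>hom T B C. \<forall>x'\<in>hom T A' B'. \<forall>y'\<in>hom T B' C'.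
        \<forall>a\<in>hom T A A'. \<forall>b\<in>hom T B B'.
          real T C A \<delta> x y \<longrightarrow> real T C' A' \<delta>' x' y' \<longrightarrow>
          cmp T b x = cmp T x' a \<longrightarrow>
          (\<exists>c\<in>hom T C C'. cmp T c y = cmp T y' b \<and> push T C a \<delta> = pull T A' c \<delta>'))"

definition ET123 :: "('o,'m,'e) ecat \<Rightarrow> bool" where
  "ET123 T \<longleftrightarrow> is_additive_category T \<and> ET1 T \<and> ET2 T \<and> ET3 T"

definition additive_subfunctor ::
  "('o,'m,'e) ecat \<Rightarrow> ('o \<Rightarrow> 'o \<Rightarrow> 'e set) \<Rightarrow> bool" where
  "additive_subfunctor T F \<longleftrightarrow>
     (\<forall>C\<in>ob T. \<forall>A\<in>ob T. subgroup (F C A) (extgrp T C A)) \<and>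
     (\<forall>C\<in>ob T. \<forall>A\<in>ob T. \<forall>A'\<in>ob T. \<forall>a\<in>hom T A A'. \<forall>\<delta>\<in>F C A. push T C a \<delta> \<in> F C A') \<and>
     (\<forall>C\<in>ob T. \<forall>C'\<in>ob T. \<forall>A\<in>ob T. \<forall>c\<in>hom T C' C. \<forall>\<delta>\<in>F C A. pull T A c \<delta> \<in> F C' A)"

definition Ph :: "('o,'m,'e) ecat \<Rightarrow> ('o \<Rightarrow> 'o \<Rightarrow> 'e set) \<Rightarrow> 'm set" where
  "Ph T F = {\<phi>. \<exists>X\<in>ob T. \<exists>C\<in>ob T. \<phi> \<in> hom T X C \<and>
                 (\<forall>A\<in>ob T. \<forall>\<delta>\<in>ext T C A. pull T A \<phi> \<delta> \<in> F X A)}"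

definition Finj :: "('o,'m,'e) ecat \<Rightarrow> ('o \<Rightarrow> 'o \<Rightarrow> 'e set) \<Rightarrow> 'm set" where
  "Finj T F = {i. \<exists>A\<in>ob T. \<exists>Y\<in>ob T. i \<in> hom T A Y \<and>
                 (\<forall>C\<in>ob T. \<forall>\<delta>\<in>F C A. push T C i \<delta> = ezero T C Y)}"

definition perpE :: "('o,'m,'e) ecat \<Rightarrow> 'm set \<Rightarrow> 'm set" where
  "perpE T M = {g. \<exists>X\<in>ob T. \<exists>C\<in>ob T. g \<in> hom T X C \<and>
                 (\<forall>m\<in>M. \<forall>A\<in>ob T. \<forall>Y\<in>ob T. m \<in> hom T A Y \<longrightarrow>
                    (\<forall>\<delta>\<in>ext T C A. pull T Y g (push T C m \<delta>) = ezero T X Y))}"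

definition enough_inj_morphisms ::
  "('o,'m,'e) ecat \<Rightarrow> ('o \<Rightarrow> 'o \<Rightarrow> 'e set) \<Rightarrow> bool" where
  "enough_inj_morphisms T F \<longleftrightarrow>
     (\<forall>A\<in>ob T. \<exists>B\<in>ob T. \<exists>C\<in>ob T. \<exists>e\<in>hom T A B. \<exists>y\<in>hom T B C. \<exists>\<delta>\<in>F C A.
        real T C A \<delta> e y \<and> e \<in> Finj T F)"

end

theory Submission
  imports Defs
begin

text \<open>
  A phantom g : X \<rightarrow> C kills every F-injective m, since
  g^* m_* \<delta> = m_* g^* \<delta> and g^* \<delta> lies in F. Conversely, let g be
  E-orthogonal to F-inj, \<delta> \<in> E(C,A), and choose an F-triangle with
  F-injective inflation e : A \<rightarrow> B. Then \<theta> = g^* \<delta> satisfies e_* \<theta> = 0,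
  so e = b x for an inflation x : A \<rightarrow> M of \<theta>; completing (1_A, b) to a morphism of
  E-triangles by (ET3) exhibits \<theta> as a pullback of the F-extension \<rho>,
  hence \<theta> \<in> F.
\<close>

locale et_category =
  fixes T :: "('o, 'm, 'e) ecat"
  assumes ET123: "ET123 T"
begin

lemma additive: "is_additive_category T"
  and ET1: "ET1 T" and ET2: "ET2 T" and ET3: "ET3 T"
  using ET123 unfolding ET123_def by auto

lemma category: "is_category T"
  using additive unfolding is_additive_category_def by blast

lemma hom_objects_unique:
  assumes "X \<in> ob T" "Y \<in> ob T" "X' \<in> ob T" "Y' \<in> ob T"
    and "f \<in> ecat.hom T X Y" "f \<in> ecat.hom T X' Y'"
  shows "X = X' \<and> Y = Y'"
proof -
  have "ecat.hom T X Y \<inter> ecat.hom T X' Y' \<noteq> {}" using assms(5,6) by blast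
  with category assms(1-4) show ?thesis unfolding is_category_def by (elim conjE) simp
qed

lemma id_in_hom: "X \<in> ob T \<Longrightarrow> idm T X \<in> ecat.hom T X X"
  using category unfolding is_category_def by blast

lemma comp_id_left: "X \<in> ob T \<Longrightarrow> Y \<in> ob T \<Longrightarrow> f \<in> ecat.hom T X Y \<Longrightarrow> cmp T (idm T Y) f = f"
  and comp_id_right: "X \<in> ob T \<Longrightarrow> Y \<in> ob T \<Longrightarrow> f \<in> ecat.hom T X Y \<Longrightarrow> cmp T f (idm T X) = f"
  using category unfolding is_category_def by blast+

lemma comp_in_hom:
  "X \<in> ob T \<Longrightarrow> Y \<in> ob T \<Longrightarrow> Z \<in> ob T \<Longrightarrow> f \<in> ecat.hom T X Y \<Longrightarrow> g \<in> ecat.hom T Y Z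
    \<Longrightarrow> cmp T g f \<in> ecat.hom T X Z"
  using category unfolding is_category_def by blast

lemma comp_assoc:
  assumes "W \<in> ob T" "X \<in> ob T" "Y \<in> ob T" "Z \<in> ob T"
    and "f \<in> ecat.hom T W X" "g \<in> ecat.hom T X Y" "h \<in> ecat.hom T Y Z"
  shows "cmp T h (cmp T g f) = cmp T (cmp T h g) f"
  using category assms unfolding is_category_def by (elim conjE) simp

lemma biproduct_exists:
  "X \<in> ob T \<Longrightarrow> Y \<in> ob T \<Longrightarrow> \<exists>S i1 i2 p1 p2. is_biproduct T X Y S i1 i2 p1 p2"
  using additive unfolding is_additive_category_def by blast

lemma emap_in_ext:
  "C \<in> ob T \<Longrightarrow> C' \<in> ob T \<Longrightarrow> A \<in> ob T \<Longrightarrow> A' \<in> ob T \<Longrightarrow> c \<in> ecat.hom T C' C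
    \<Longrightarrow> a \<in> ecat.hom T A A' \<Longrightarrow> \<delta> \<in> ext T C A \<Longrightarrow> emap T c a \<delta> \<in> ext T C' A'"
  using ET1 unfolding ET1_def by (elim conjE) simp

lemma emap_id: "C \<in> ob T \<Longrightarrow> A \<in> ob T \<Longrightarrow> \<delta> \<in> ext T C A \<Longrightarrow> emap T (idm T C) (idm T A) \<delta> = \<delta>"
  using ET1 unfolding ET1_def by (elim conjE) simp

lemma emap_comp:
  assumes "C \<in> ob T" "C1 \<in> ob T" "C2 \<in> ob T" "A \<in> ob T" "A1 \<in> ob T" "A2 \<in> ob T"
    and "c1 \<in> ecat.hom T C1 C" "c2 \<in> ecat.hom T C2 C1"
    and "a1 \<in> ecat.hom T A A1" "a2 \<in> ecat.hom T A1 A2" "\<delta> \<in> ext T C A"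
  shows "emap T (cmp T c1 c2) (cmp T a2 a1) \<delta> = emap T c2 a2 (emap T c1 a1 \<delta>)"
  using ET1 assms unfolding ET1_def by (elim conjE) simp

lemma ezero_in_ext:
  assumes "C \<in> ob T" "A \<in> ob T"
  shows "ezero T C A \<in> ext T C A"
proof -
  have "comm_group (extgrp T C A)" using ET1 assms unfolding ET1_def by (elim conjE) simp
  then show ?thesis using monoid.one_closed
    by (fastforce simp: comm_group_def comm_monoid_def extgrp_def)
qed

lemma pull_in_ext:
  "X \<in> ob T \<Longrightarrow> C \<in> ob T \<Longrightarrow> A \<in> ob T \<Longrightarrow> g \<in> ecat.hom T X C \<Longrightarrow> \<delta> \<in> ext T C A
    \<Longrightarrow> pull T A g \<delta> \<in> ext T X A"
  unfolding pull_def by (rule emap_in_ext) (auto intro: id_in_hom)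

lemma push_id: "C \<in> ob T \<Longrightarrow> A \<in> ob T \<Longrightarrow> \<delta> \<in> ext T C A \<Longrightarrow> push T C (idm T A) \<delta> = \<delta>"
  and pull_id: "C \<in> ob T \<Longrightarrow> A \<in> ob T \<Longrightarrow> \<delta> \<in> ext T C A \<Longrightarrow> pull T A (idm T C) \<delta> = \<delta>"
  unfolding push_def pull_def by (simp_all add: emap_id)

lemma pull_push_commute:
  assumes ob: "X \<in> ob T" "C \<in> ob T" "A \<in> ob T" "Y \<in> ob T"
    and g: "g \<in> ecat.hom T X C" and m: "m \<in> ecat.hom T A Y" and \<delta>: "\<delta> \<in> ext T C A"
  shows "pull T Y g (push T C m \<delta>) = push T X m (pull T A g \<delta>)"
proof -
  have "pull T Y g (push T C m \<delta>) = emap T (cmp T (idm T C) g) (cmp T (idm T Y) m) \<delta>"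
    unfolding pull_def push_def
    using emap_comp[OF ob(2,2,1,3,4,4) id_in_hom g m id_in_hom \<delta>] ob by simp
  also have "\<dots> = emap T (cmp T g (idm T X)) (cmp T m (idm T A)) \<delta>"
    using comp_id_left comp_id_right ob g m by simp
  also have "\<dots> = push T X m (pull T A g \<delta>)"
    unfolding pull_def push_def
    using emap_comp[OF ob(2,1,1,3,3,4) g id_in_hom id_in_hom m \<delta>] ob by simp
  finally show ?thesis .
qed

lemma realization_exists:
  assumes "C \<in> ob T" "A \<in> ob T" "\<delta> \<in> ext T C A"
  obtains M x y where "M \<in> ob T" "x \<in> ecat.hom T A M" "y \<in> ecat.hom T M C" "real T C A \<delta> x y"
proof -
  have "\<exists>x y. real T C A \<delta> x y" and "\<And>x y. real T C A \<delta> x y \<Longrightarrow> is_seq T A C x y"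
    using ET2[unfolded ET2_def, THEN conjunct1] assms by blast+
  then show ?thesis using that unfolding is_seq_def by blast
qed

lemma split_realizes_zero:
  "A \<in> ob T \<Longrightarrow> C \<in> ob T \<Longrightarrow> is_biproduct T A C S i1 i2 p1 p2 \<Longrightarrow> real T C A (ezero T C A) i1 p2"
  using ET2[unfolded ET2_def, THEN conjunct2, THEN conjunct2, THEN conjunct1] by blast

lemma realization_morphism:
  assumes "A \<in> ob T" "B \<in> ob T" "C \<in> ob T" "A' \<in> ob T" "B' \<in> ob T" "C' \<in> ob T"
    and "\<delta> \<in> ext T C A" "\<delta>' \<in> ext T C' A'"
    and "x \<in> ecat.hom T A B" "y \<in> ecat.hom T B C" "x' \<in> ecat.hom T A' B'" "y' \<in> ecat.hom T B' C'"
    and "a \<in> ecat.hom T A A'" "c \<in> ecat.hom T C C'"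
    and "real T C A \<delta> x y" "real T C' A' \<delta>' x' y'" "push T C a \<delta> = pull T A' c \<delta>'"
  shows "\<exists>b\<in>ecat.hom T B B'. cmp T b x = cmp T x' a \<and> cmp T y' b = cmp T c y"
  using ET2[unfolded ET2_def, THEN conjunct2, THEN conjunct1, rule_format, OF assms(1-16)] assms(17)
  by blast

lemma triangle_morphism:
  assumes "A \<in> ob T" "B \<in> ob T" "C \<in> ob T" "A' \<in> ob T" "B' \<in> ob T" "C' \<in> ob T"
    and "\<delta> \<in> ext T C A" "\<delta>' \<in> ext T C' A'"
    and "x \<in> ecat.hom T A B" "y \<in> ecat.hom T B C" "x' \<in> ecat.hom T A' B'" "y' \<in> ecat.hom T B' C'"
    and "a \<in> ecat.hom T A A'" "b \<in> ecat.hom T B B'"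
    and "real T C A \<delta> x y" "real T C' A' \<delta>' x' y'" "cmp T b x = cmp T x' a"
  shows "\<exists>c\<in>ecat.hom T C C'. cmp T c y = cmp T y' b \<and> push T C a \<delta> = pull T A' c \<delta>'"
  using ET3[unfolded ET3_def, rule_format, OF assms(1-16)] assms(17) by blast

text \<open>Compare the realization of \<theta> with the split sequence realizing
  e_* \<theta> = 0 via (ET2), then project the lift onto B.\<close>

lemma factors_through_inflation:
  assumes ob: "A \<in> ob T" "M \<in> ob T" "X \<in> ob T" "B \<in> ob T"
    and \<theta>: "\<theta> \<in> ext T X A" "real T X A \<theta> x z"
    and x: "x \<in> ecat.hom T A M" and z: "z \<in> ecat.hom T M X"
    and e: "e \<in> ecat.hom T A B" and push_zero: "push T X e \<theta> = ezero T X B"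
  obtains b where "b \<in> ecat.hom T M B" "cmp T b x = e"
proof -
  obtain S i1 i2 p1 p2 where bp: "is_biproduct T B X S i1 i2 p1 p2"
    using biproduct_exists ob by blast
  then have S: "S \<in> ob T" "i1 \<in> ecat.hom T B S" "p1 \<in> ecat.hom T S B"
    "p2 \<in> ecat.hom T S X" "cmp T p1 i1 = idm T B"
    unfolding is_biproduct_def by auto
  have zero: "ezero T X B \<in> ext T X B" "real T X B (ezero T X B) i1 p2"
    using ezero_in_ext split_realizes_zero bp ob by auto
  have "push T X e \<theta> = pull T B (idm T X) (ezero T X B)"
    using push_zero pull_id zero ob by simp
  then obtain b' where b': "b' \<in> ecat.hom T M S" "cmp T b' x = cmp T i1 e"
    using realization_morphism[OF ob(1,2,3,4) S(1) ob(3) \<theta>(1) zero(1) x z S(2,4) e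
        id_in_hom[OF ob(3)] \<theta>(2) zero(2)] by blast
  show thesis
  proof
    show "cmp T p1 b' \<in> ecat.hom T M B" using comp_in_hom[OF ob(2) S(1) ob(4) b'(1) S(3)] .
    have "cmp T (cmp T p1 b') x = cmp T p1 (cmp T i1 e)"
      using comp_assoc[OF ob(1,2) S(1) ob(4) x b'(1) S(3)] b'(2) by simp
    also have "\<dots> = e"
      using comp_assoc[OF ob(1,4) S(1) ob(4) e S(2,3)] S(5) comp_id_left[OF ob(1,4) e] by simp
    finally show "cmp T (cmp T p1 b') x = e" .
  qed
qed

lemma pullback_of_triangle_through_lift:
  assumes ob: "A \<in> ob T" "M \<in> ob T" "X \<in> ob T" "B \<in> ob T" "D \<in> ob T"
    and \<theta>: "\<theta> \<in> ext T X A" "real T X A \<theta> x z"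
    and x: "x \<in> ecat.hom T A M" and z: "z \<in> ecat.hom T M X"
    and \<rho>: "\<rho> \<in> ext T D A" "real T D A \<rho> e y"
    and e: "e \<in> ecat.hom T A B" and y: "y \<in> ecat.hom T B D"
    and b: "b \<in> ecat.hom T M B" "cmp T b x = e"
  obtains h where "h \<in> ecat.hom T X D" "\<theta> = pull T A h \<rho>"
proof -
  have "cmp T b x = cmp T e (idm T A)" using b(2) comp_id_right[OF ob(1,4) e] by simp
  then obtain h where "h \<in> ecat.hom T X D" "push T X (idm T A) \<theta> = pull T A h \<rho>"
    using triangle_morphism[OF ob(1,2,3,1,4,5) \<theta>(1) \<rho>(1) x z e y id_in_hom[OF ob(1)] b(1)
        \<theta>(2) \<rho>(2)] by blast
  then show thesis using that push_id[OF ob(3,1) \<theta>(1)] by simp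
qed

end

locale et_subfunctor = et_category +
  fixes F :: "'o \<Rightarrow> 'o \<Rightarrow> 'e set"
  assumes subfunctor: "additive_subfunctor T F"
begin

lemma subfunctor_subset_ext:
  assumes "C \<in> ob T" "A \<in> ob T"
  shows "F C A \<subseteq> ext T C A"
proof -
  have "subgroup (F C A) (extgrp T C A)"
    using subfunctor assms unfolding additive_subfunctor_def by blast
  then show ?thesis using subgroup.subset unfolding extgrp_def by fastforce
qed

lemma pull_in_subfunctor:
  "C \<in> ob T \<Longrightarrow> C' \<in> ob T \<Longrightarrow> A \<in> ob T \<Longrightarrow> c \<in> ecat.hom T C' C \<Longrightarrow> \<delta> \<in> F C A
    \<Longrightarrow> pull T A c \<delta> \<in> F C' A"
  using subfunctor unfolding additive_subfunctor_def by blast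

lemma Finj_push_zero:
  assumes "m \<in> Finj T F" "A \<in> ob T" "Y \<in> ob T" "m \<in> ecat.hom T A Y"
    and "C \<in> ob T" "\<delta> \<in> F C A"
  shows "push T C m \<delta> = ezero T C Y"
proof -
  obtain A' Y' where ob': "A' \<in> ob T" "Y' \<in> ob T" and m': "m \<in> ecat.hom T A' Y'"
    and zero: "\<forall>C\<in>ob T. \<forall>\<delta>\<in>F C A'. push T C m \<delta> = ezero T C Y'"
    using assms(1) unfolding Finj_def by blast
  have "A' = A \<and> Y' = Y" using hom_objects_unique[OF ob' assms(2,3) m' assms(4)] .
  then show ?thesis using zero assms(5,6) by blast
qed

lemma Ph_subset_perpE: "Ph T F \<subseteq> perpE T (Finj T F)"
proof
  fix g assume "g \<in> Ph T F"
  then obtain X C where ob: "X \<in> ob T" "C \<in> ob T" and g: "g \<in> ecat.hom T X C"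
    and phantom: "\<forall>A\<in>ob T. \<forall>\<delta>\<in>ext T C A. pull T A g \<delta> \<in> F X A"
    unfolding Ph_def by blast
  have "pull T Y g (push T C m \<delta>) = ezero T X Y"
    if "m \<in> Finj T F" "A \<in> ob T" "Y \<in> ob T" "m \<in> ecat.hom T A Y" "\<delta> \<in> ext T C A"
    for m A Y \<delta>
    using pull_push_commute[OF ob _ _ g] Finj_push_zero phantom ob that by simp
  then show "g \<in> perpE T (Finj T F)" unfolding perpE_def using ob g by blast
qed

lemma perpE_subset_Ph:
  assumes enough: "enough_inj_morphisms T F"
  shows "perpE T (Finj T F) \<subseteq> Ph T F"
proof
  fix g assume "g \<in> perpE T (Finj T F)"
  then obtain X C where ob: "X \<in> ob T" "C \<in> ob T" and g: "g \<in> ecat.hom T X C"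
    and perp: "\<forall>m\<in>Finj T F. \<forall>A\<in>ob T. \<forall>Y\<in>ob T. m \<in> ecat.hom T A Y \<longrightarrow>
                 (\<forall>\<delta>\<in>ext T C A. pull T Y g (push T C m \<delta>) = ezero T X Y)"
    unfolding perpE_def by blast
  have "pull T A g \<delta> \<in> F X A" if A: "A \<in> ob T" and \<delta>: "\<delta> \<in> ext T C A" for A \<delta>
  proof -
    obtain B D e y \<rho> where BD: "B \<in> ob T" "D \<in> ob T"
      and e: "e \<in> ecat.hom T A B" and y: "y \<in> ecat.hom T B D"
      and \<rho>: "\<rho> \<in> F D A" "real T D A \<rho> e y" and e_inj: "e \<in> Finj T F"
      using enough A unfolding enough_inj_morphisms_def by blast
    have \<rho>_ext: "\<rho> \<in> ext T D A" using subfunctor_subset_ext[OF BD(2) A] \<rho>(1) by blast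
    define \<theta> where "\<theta> = pull T A g \<delta>"
    have \<theta>_ext: "\<theta> \<in> ext T X A" unfolding \<theta>_def using pull_in_ext[OF ob(1,2) A g \<delta>] .
    have "push T X e \<theta> = ezero T X B"
      using pull_push_commute[OF ob A BD(1) g e \<delta>] perp e_inj A BD(1) e \<delta>
      unfolding \<theta>_def by simp
    moreover obtain M x z where M: "M \<in> ob T" and x: "x \<in> ecat.hom T A M"
      and z: "z \<in> ecat.hom T M X" and \<theta>_real: "real T X A \<theta> x z"
      using realization_exists[OF ob(1) A \<theta>_ext] by blast
    ultimately obtain b where "b \<in> ecat.hom T M B" "cmp T b x = e"
      using factors_through_inflation[OF A M ob(1) BD(1) \<theta>_ext \<theta>_real x z e] by blast
    then obtain h where "h \<in> ecat.hom T X D" "\<theta> = pull T A h \<rho>"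
      using pullback_of_triangle_through_lift[OF A M ob(1) BD \<theta>_ext \<theta>_real x z \<rho>_ext \<rho>(2) e y]
      by blast
    then show ?thesis using pull_in_subfunctor[OF BD(2) ob(1) A _ \<rho>(1)] unfolding \<theta>_def by simp
  qed
  then show "g \<in> Ph T F" unfolding Ph_def using ob g by blast
qed

end

theorem proposition3p12:
  fixes T :: "('o, 'm, 'e) ecat" and F :: "'o \<Rightarrow> 'o \<Rightarrow> 'e set"
  assumes "ET123 T"
    and "additive_subfunctor T F"
    and "enough_inj_morphisms T F"
  shows "Ph T F = perpE T (Finj T F)"
proof -
  interpret et_subfunctor T F
    using assms(1,2) by (simp add: et_subfunctor_def et_category_def et_subfunctor_axioms_def)
  show ?thesis using Ph_subset_perpE perpE_subset_Ph[OF assms(3)] by blast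
qed

end
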